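(* Let $D$ and $m$ be positive integers, $G$ a connected graph of maximum degree at most $D$, and $S_1,\dots,S_m$ pairwise disjoint subsets of $V(G)$, each of size at least $2+(D-1)(m-1)$. Then there exist pairwise vertex-disjoint paths $P_1,\dots,P_m$ in $G$ such that for each $1\le i\le m$, $P_i$ has two distinct endpoints, both belonging to $S_i$. *)

theory Defs
  imports Main
begin

definition simple_graph :: "'a set \<Rightarrow> ('a \<Rightarrow> 'a \<Rightarrow> bool) \<Rightarrow> bool" where
  "simple_graph V E \<longleftrightarrow> finite V \<and> (\<forall>u v. E u v \<longrightarrow> E v u)
     \<and> (\<forall>v. \<not> E v v) \<and> (\<forall>u v. E u v \<longrightarrow> u \<in> V \<and> v \<in> V)"

definition degree :: "'a set \<Rightarrow> ('a \<Rightarrow> 'a \<Rightarrow> bool) \<Rightarrow> 'a \<Rightarrow> nat" where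
  "degree V E v = card {u \<in> V. E v u}"

definition max_degree_le :: "'a set \<Rightarrow> ('a \<Rightarrow> 'a \<Rightarrow> bool) \<Rightarrow> nat \<Rightarrow> bool" where
  "max_degree_le V E D \<longleftrightarrow> (\<forall>v\<in>V. degree V E v \<le> D)"

definition is_walk :: "'a set \<Rightarrow> ('a \<Rightarrow> 'a \<Rightarrow> bool) \<Rightarrow> 'a list \<Rightarrow> bool" where
  "is_walk V E p \<longleftrightarrow> p \<noteq> [] \<and> set p \<subseteq> V \<and> (\<forall>i. Suc i < length p \<longrightarrow> E (p ! i) (p ! Suc i))"

definition is_path :: "'a set \<Rightarrow> ('a \<Rightarrow> 'a \<Rightarrow> bool) \<Rightarrow> 'a list \<Rightarrow> bool" where
  "is_path V E p \<longleftrightarrow> is_walk V E p \<and> distinct p"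

definition connected_graph :: "'a set \<Rightarrow> ('a \<Rightarrow> 'a \<Rightarrow> bool) \<Rightarrow> bool" where
  "connected_graph V E \<longleftrightarrow> V \<noteq> {} \<and>
     (\<forall>u\<in>V. \<forall>v\<in>V. \<exists>p. is_walk V E p \<and> hd p = u \<and> last p = v)"

end

theory Submission imports Defs begin

(* Fix a shortest-path spanning tree with root r and take a deepest vertex v whose subtree
   contains two vertices of one of the sets, say of S_i, preferring an S_i that contains v.
   These two vertices are joined by a path inside the subtree of v. Each child subtree of v meets
   every set in at most one vertex and a vertex v other than r has at most D - 1 children, so
   deleting the subtree of v removes at most D - 1 vertices from every other set, while the rest
   of the graph stays connected through the tree. With two or more sets v cannot be r, as
   otherwise every set would have to contain r. Induction on the number of sets finishes the proof. *)

lemma is_walk_Nil [simp]: "\<not> is_walk V E []"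
  by (simp add: is_walk_def)

lemma is_walk_singleton [simp]: "is_walk V E [x] \<longleftrightarrow> x \<in> V"
  by (simp add: is_walk_def)

lemma is_walk_Cons_Cons [simp]:
  "is_walk V E (x # y # w) \<longleftrightarrow> x \<in> V \<and> E x y \<and> is_walk V E (y # w)"
  by (auto simp: is_walk_def nth_Cons less_Suc_eq_0_disj split: nat.splits)

lemma is_walk_mono: "is_walk V E w \<Longrightarrow> set w \<subseteq> W \<Longrightarrow> is_walk W E w"
  by (auto simp: is_walk_def)

lemma is_walk_set: "is_walk V E w \<Longrightarrow> set w \<subseteq> V"
  by (simp add: is_walk_def)

lemma is_path_mono: "is_path V E q \<Longrightarrow> set q \<subseteq> W \<Longrightarrow> is_path W E q"
  unfolding is_path_def using is_walk_mono by blast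

lemma is_path_set: "is_path V E q \<Longrightarrow> set q \<subseteq> V"
  unfolding is_path_def using is_walk_set by blast

lemma is_walk_join:
  assumes "is_walk V E w1" "is_walk V E w2" "last w1 = hd w2"
  shows "is_walk V E (w1 @ tl w2)"
  using assms
proof (induction w1 rule: induct_list012)
  case (2 x)
  then show ?case by (cases w2) auto
qed auto

lemma is_walk_rev:
  assumes "\<And>u v. E u v \<Longrightarrow> E v u" and "is_walk V E w"
  shows "is_walk V E (rev w)"
  using assms(2)
proof (induction w rule: induct_list012)
  case (3 x y w)
  then have "y \<in> V" using is_walk_set by fastforce
  have "is_walk V E (rev (y # w) @ tl [y, x])"
    using 3 \<open>y \<in> V\<close> assms(1) by (intro is_walk_join) (auto simp: hd_rev)
  then show ?case by simp
qed auto

lemma is_walk_ConsD: "is_walk V E (x # w) \<Longrightarrow> w \<noteq> [] \<Longrightarrow> is_walk V E w"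
  by (cases w) auto

lemma is_walk_appendD: "is_walk V E (w1 @ w2) \<Longrightarrow> w2 \<noteq> [] \<Longrightarrow> is_walk V E w2"
  by (induction w1) (auto dest: is_walk_ConsD)

lemma walk_shortens_to_path:
  assumes "is_walk V E w"
  shows "\<exists>q. is_path V E q \<and> hd q = hd w \<and> last q = last w \<and> set q \<subseteq> set w"
  using assms
proof (induction w rule: induct_list012)
  case (3 x y w)
  then obtain q where q: "is_path V E q" "hd q = y" "last q = last (y # w)" "set q \<subseteq> set (y # w)"
    by auto
  then have "q \<noteq> []" by (auto simp: is_path_def)
  show ?case
  proof (cases "x \<in> set q")
    case True
    then obtain q1 q2 where q12: "q = q1 @ x # q2" by (meson split_list)
    then have "is_path V E (x # q2)"
      using q(1) by (auto simp: is_path_def dest: is_walk_appendD)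
    then show ?thesis using q q12 by (intro exI[of _ "x # q2"]) auto
  next
    case False
    then have "is_path V E (x # q)"
      using q 3(3) \<open>q \<noteq> []\<close> by (cases q) (auto simp: is_path_def)
    then show ?thesis using q \<open>q \<noteq> []\<close> by (intro exI[of _ "x # q"]) auto
  qed
next
  case (2 x)
  then show ?case by (intro exI[of _ "[x]"]) (simp add: is_path_def)
qed simp

lemma path_between_walks_with_common_end:
  assumes "\<And>u v. E u v \<Longrightarrow> E v u" "is_walk V E wa" "is_walk V E wb" "last wa = last wb"
  shows "\<exists>q. is_path V E q \<and> hd q = hd wa \<and> last q = hd wb \<and> set q \<subseteq> set wa \<union> set wb"
proof -
  have "wa \<noteq> []" using assms by auto
  obtain u us where rev_wb: "rev wb = u # us" using assms(3) by (cases "rev wb") auto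
  let ?w = "wa @ us"
  have "is_walk V E ?w"
    using is_walk_join[OF assms(2) is_walk_rev[OF assms(1,3)]] assms(4) rev_wb
    by (simp add: hd_rev)
  moreover have "hd ?w = hd wa" "last ?w = hd wb" "set ?w \<subseteq> set wa \<union> set wb"
  proof -
    have "last (u # us) = hd wb" "set (u # us) = set wb"
      using assms(3) by (simp_all flip: rev_wb add: last_rev)
    then show "hd ?w = hd wa" "last ?w = hd wb" "set ?w \<subseteq> set wa \<union> set wb"
      using \<open>wa \<noteq> []\<close> assms(4) rev_wb by (auto simp: last_append hd_rev)
  qed
  ultimately show ?thesis
    by (metis (no_types, lifting) walk_shortens_to_path subset_trans)
qed

lemma max_degree_le_subset:
  assumes "max_degree_le V E D" "finite V" "W \<subseteq> V"
  shows "max_degree_le W E D"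
  unfolding max_degree_le_def degree_def
proof
  fix v assume "v \<in> W"
  have "card {u \<in> W. E v u} \<le> card {u \<in> V. E v u}"
    using assms(2,3) by (intro card_mono) auto
  moreover have "card {u \<in> V. E v u} \<le> D"
    using assms(1,3) \<open>v \<in> W\<close> by (auto simp: max_degree_le_def degree_def)
  ultimately show "card {u \<in> W. E v u} \<le> D" by simp
qed

lemma connected_graphI_root:
  assumes "\<And>u v. E u v \<Longrightarrow> E v u" "r \<in> V"
    and "\<And>x. x \<in> V \<Longrightarrow> \<exists>w. is_walk V E w \<and> hd w = x \<and> last w = r"
  shows "connected_graph V E"
  unfolding connected_graph_def
proof (intro conjI ballI)
  fix u v assume "u \<in> V" "v \<in> V"
  obtain wu where wu: "is_walk V E wu" "hd wu = u" "last wu = r"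
    using assms(3) \<open>u \<in> V\<close> by blast
  obtain wv where wv: "is_walk V E wv" "hd wv = v" "last wv = r"
    using assms(3) \<open>v \<in> V\<close> by blast
  obtain q where "is_path V E q" "hd q = u" "last q = v"
    using path_between_walks_with_common_end[OF assms(1) wu(1) wv(1)] wu wv by auto
  then show "\<exists>p. is_walk V E p \<and> hd p = u \<and> last p = v"
    by (auto simp: is_path_def)
qed (use assms(2) in auto)

definition linking_path :: "'a set \<Rightarrow> ('a \<Rightarrow> 'a \<Rightarrow> bool) \<Rightarrow> 'a set \<Rightarrow> 'a list \<Rightarrow> bool" where
  "linking_path V E A q \<longleftrightarrow> is_path V E q \<and> hd q \<noteq> last q \<and> hd q \<in> A \<and> last q \<in> A"

definition disjoint_linkage ::
    "'a set \<Rightarrow> ('a \<Rightarrow> 'a \<Rightarrow> bool) \<Rightarrow> 'i set \<Rightarrow> ('i \<Rightarrow> 'a set) \<Rightarrow> ('i \<Rightarrow> 'a list) \<Rightarrow> bool" where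
  "disjoint_linkage V E I S P \<longleftrightarrow>
     (\<forall>i\<in>I. linking_path V E (S i) (P i)) \<and> (\<forall>i\<in>I. \<forall>j\<in>I. i \<noteq> j \<longrightarrow> set (P i) \<inter> set (P j) = {})"

lemma disjoint_linkage_empty: "disjoint_linkage V E {} S P"
  by (simp add: disjoint_linkage_def)

lemma disjoint_linkage_singleton: "linking_path V E (S i) q \<Longrightarrow> disjoint_linkage V E {i} S (\<lambda>_. q)"
  by (simp add: disjoint_linkage_def)

lemma disjoint_linkage_insert:
  assumes "disjoint_linkage V' E (I - {i}) S' P" "V' \<subseteq> V" "\<And>k. k \<in> I - {i} \<Longrightarrow> S' k \<subseteq> S k"
    and "linking_path V E (S i) q" "set q \<inter> V' = {}"
  shows "disjoint_linkage V E I S (P(i := q))"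
proof -
  have P_set: "set (P k) \<subseteq> V'" and P_link: "linking_path V E (S k) (P k)"
    if "k \<in> I - {i}" for k
  proof -
    have lp: "linking_path V' E (S' k) (P k)"
      using assms(1) that by (simp add: disjoint_linkage_def)
    then show "set (P k) \<subseteq> V'"
      unfolding linking_path_def using is_path_set by blast
    then show "linking_path V E (S k) (P k)"
      using lp assms(2) assms(3)[OF that] is_path_mono[of V' E "P k" V]
      by (auto simp: linking_path_def)
  qed
  have P_disjoint: "set (P k) \<inter> set (P j) = {}" if "k \<in> I - {i}" "j \<in> I - {i}" "k \<noteq> j" for k j
    using assms(1) that unfolding disjoint_linkage_def by blast
  show ?thesis
    unfolding disjoint_linkage_def
  proof (intro conjI ballI impI)
    fix k assume "k \<in> I"
    then show "linking_path V E (S k) ((P(i := q)) k)"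
      using assms(4) P_link by (cases "k = i") auto
  next
    fix k j assume "k \<in> I" "j \<in> I" "k \<noteq> j"
    then show "set ((P(i := q)) k) \<inter> set ((P(i := q)) j) = {}"
      using assms(5) P_set P_disjoint by (cases "k = i"; cases "j = i") fastforce+
  qed
qed

locale rooted_spanning_tree =
  fixes V :: "'a set" and E :: "'a \<Rightarrow> 'a \<Rightarrow> bool"
    and r :: 'a and parent :: "'a \<Rightarrow> 'a" and depth :: "'a \<Rightarrow> nat"
  assumes finite_V: "finite V"
    and edge_sym: "E u v \<Longrightarrow> E v u"
    and root_in_V: "r \<in> V"
    and parent_root: "parent r = r"
    and parent_in_V: "x \<in> V \<Longrightarrow> parent x \<in> V"
    and parent_edge: "x \<in> V \<Longrightarrow> x \<noteq> r \<Longrightarrow> E x (parent x)"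
    and depth_parent: "x \<in> V \<Longrightarrow> x \<noteq> r \<Longrightarrow> depth (parent x) < depth x"

lemma connected_graph_has_rooted_spanning_tree:
  assumes "finite V" "\<And>u v. E u v \<Longrightarrow> E v u" "connected_graph V E"
  obtains r parent depth where "rooted_spanning_tree V E r parent depth"
proof -
  obtain r where r: "r \<in> V" using assms(3) by (auto simp: connected_graph_def)
  define depth where
    "depth x = (LEAST k. \<exists>w. is_walk V E w \<and> hd w = x \<and> last w = r \<and> length w = Suc k)" for x
  have closer_neighbour: "\<exists>y. y \<in> V \<and> E x y \<and> depth y < depth x" if "x \<in> V" "x \<noteq> r" for x
  proof -
    obtain w0 where "is_walk V E w0" "hd w0 = x" "last w0 = r"
      using assms(3) r \<open>x \<in> V\<close> by (auto simp: connected_graph_def)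
    then have "\<exists>k w. is_walk V E w \<and> hd w = x \<and> last w = r \<and> length w = Suc k"
      by (intro exI[of _ "length w0 - 1"] exI[of _ w0]) (auto simp: is_walk_def)
    then have "\<exists>w. is_walk V E w \<and> hd w = x \<and> last w = r \<and> length w = Suc (depth x)"
      unfolding depth_def by (rule LeastI_ex)
    then obtain w where w: "is_walk V E w" "hd w = x" "last w = r" "length w = Suc (depth x)"
      by blast
    then obtain y ys where w_eq: "w = x # y # ys"
      using \<open>x \<noteq> r\<close> by (cases w; cases "tl w") auto
    then have "depth y \<le> length ys"
      using w unfolding depth_def by (intro Least_le exI[of _ "y # ys"]) auto
    moreover have "y \<in> V" "E x y"
      using w(1) w_eq is_walk_set by fastforce+
    ultimately show ?thesis
      using w(4) w_eq by auto
  qed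
  define parent where
    "parent x = (if x = r then r else SOME y. y \<in> V \<and> E x y \<and> depth y < depth x)" for x
  have parent_prop: "parent x \<in> V \<and> E x (parent x) \<and> depth (parent x) < depth x"
    if "x \<in> V" "x \<noteq> r" for x
    using someI_ex[OF closer_neighbour[OF that]] that by (simp add: parent_def)
  have "rooted_spanning_tree V E r parent depth"
  proof
    show "parent r = r" by (simp add: parent_def)
    show "parent x \<in> V" if "x \<in> V" for x
      using parent_prop[OF that] r by (cases "x = r") (auto simp: parent_def)
  qed (use assms(1,2) r parent_prop in blast)+
  then show thesis ..
qed

context rooted_spanning_tree
begin

lemma ancestor_in_V: "x \<in> V \<Longrightarrow> (parent ^^ k) x \<in> V"
  by (induction k) (auto intro: parent_in_V)

lemma ancestor_root: "(parent ^^ k) r = r"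
  by (induction k) (auto simp: parent_root)

lemma reaches_root: "x \<in> V \<Longrightarrow> \<exists>k. (parent ^^ k) x = r"
proof (induction "depth x" arbitrary: x rule: less_induct)
  case less
  show ?case
  proof (cases "x = r")
    case False
    then obtain k where "(parent ^^ k) (parent x) = r"
      using less parent_in_V depth_parent by blast
    then show ?thesis by (metis funpow_Suc_right o_apply)
  qed (metis funpow_0)
qed

lemma walk_to_ancestor:
  assumes "x \<in> V"
  shows "\<exists>w. is_walk V E w \<and> hd w = x \<and> last w = (parent ^^ n) x
              \<and> set w \<subseteq> {(parent ^^ k) x | k. k \<le> n}"
  using assms
proof (induction n arbitrary: x)
  case 0
  then show ?case by (intro exI[of _ "[x]"]) auto
next
  case (Suc n)
  then obtain w where w: "is_walk V E w" "hd w = parent x" "last w = (parent ^^ Suc n) x"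
      "set w \<subseteq> {(parent ^^ Suc k) x | k. k \<le> n}"
    using parent_in_V by (fastforce simp: funpow_Suc_right simp del: funpow.simps)
  have w_set: "set w \<subseteq> {(parent ^^ k) x | k. k \<le> Suc n}"
    using w(4) by (fastforce simp del: funpow.simps)
  show ?case
  proof (cases "x = r")
    case True
    then show ?thesis using w w_set parent_root by auto
  next
    case False
    then have "is_walk V E (x # w)" using w Suc.prems parent_edge by (cases w) auto
    then show ?thesis using w w_set by (intro exI[of _ "x # w"]) (auto intro: exI[of _ 0])
  qed
qed

definition subtree :: "'a \<Rightarrow> 'a set" where
  "subtree v = {x \<in> V. \<exists>k. (parent ^^ k) x = v}"

definition children :: "'a \<Rightarrow> 'a set" where
  "children v = {c \<in> V. c \<noteq> v \<and> parent c = v}"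

lemma subtree_subset_V: "subtree v \<subseteq> V"
  by (auto simp: subtree_def)

lemma subtree_root: "subtree r = V"
  using reaches_root by (auto simp: subtree_def)

lemma root_notin_subtree: "v \<noteq> r \<Longrightarrow> r \<notin> subtree v"
  by (auto simp: subtree_def ancestor_root)

lemma walk_within_subtree:
  assumes "x \<in> subtree v"
  shows "\<exists>w. is_walk (subtree v) E w \<and> hd w = x \<and> last w = v"
proof -
  obtain n where "x \<in> V" "(parent ^^ n) x = v"
    using assms by (auto simp: subtree_def)
  moreover obtain w where w: "is_walk V E w" "hd w = x" "last w = (parent ^^ n) x"
      "set w \<subseteq> {(parent ^^ k) x | k. k \<le> n}"
    using walk_to_ancestor[OF \<open>x \<in> V\<close>] by blast
  moreover have "(parent ^^ k) x \<in> subtree v" if "k \<le> n" for k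
  proof -
    have "(parent ^^ (n - k)) ((parent ^^ k) x) = (parent ^^ n) x"
      using that by (metis funpow_add comp_apply le_add_diff_inverse2)
    then show ?thesis
      using \<open>x \<in> V\<close> \<open>(parent ^^ n) x = v\<close> ancestor_in_V by (auto simp: subtree_def)
  qed
  ultimately show ?thesis
    by (intro exI[of _ w]) (auto intro: is_walk_mono)
qed

lemma connected_graph_Diff_subtree:
  assumes "v \<noteq> r"
  shows "connected_graph (V - subtree v) E"
proof (rule connected_graphI_root[OF edge_sym])
  show "r \<in> V - subtree v"
    using root_in_V root_notin_subtree[OF assms] by blast
  fix x assume x: "x \<in> V - subtree v"
  then obtain n where "(parent ^^ n) x = r"
    using reaches_root by blast
  moreover obtain w where w: "is_walk V E w" "hd w = x" "last w = (parent ^^ n) x"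
      "set w \<subseteq> {(parent ^^ k) x | k. k \<le> n}"
    using walk_to_ancestor x by blast
  moreover have "(parent ^^ k) x \<notin> subtree v" for k
    using x by (auto simp: subtree_def) (metis funpow_add comp_apply)
  ultimately show "\<exists>w. is_walk (V - subtree v) E w \<and> hd w = x \<and> last w = r"
    using x ancestor_in_V by (intro exI[of _ w]) (auto intro!: is_walk_mono[OF w(1)])
qed

lemma subtree_subset_children:
  "subtree v \<subseteq> insert v (\<Union>c \<in> children v. subtree c)"
proof -
  have "x = v \<or> (\<exists>c \<in> children v. x \<in> subtree c)" if "x \<in> V" "(parent ^^ k) x = v" for x k
    using that
  proof (induction k arbitrary: v)
    case (Suc k)
    show ?case
    proof (cases "(parent ^^ k) x = v")
      case False
      then have "(parent ^^ k) x \<in> children v"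
        using Suc.prems ancestor_in_V by (auto simp: children_def)
      then show ?thesis using Suc.prems(1) by (auto simp: subtree_def)
    qed (rule Suc.IH[OF Suc.prems(1)])
  qed simp
  then show ?thesis by (auto simp: subtree_def)
qed


lemma depth_child: "c \<in> children v \<Longrightarrow> depth v < depth c"
  using depth_parent parent_root by (fastforce simp: children_def)

lemma children_subset_neighbours: "children v \<subseteq> {u \<in> V. E v u}"
  using parent_edge parent_root edge_sym by (fastforce simp: children_def)

lemma parent_notin_children:
  assumes "v \<in> V" "v \<noteq> r"
  shows "parent v \<notin> children v"
proof
  assume "parent v \<in> children v"
  then have "parent (parent v) = v" "parent v \<noteq> r"
    using assms(2) parent_root by (auto simp: children_def)
  then show False
    using depth_parent[OF assms] depth_parent[OF parent_in_V[OF assms(1)]] by simp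
qed

lemma card_children_le:
  assumes "max_degree_le V E D" "v \<in> V"
  shows "card (children v) \<le> D" and "v \<noteq> r \<Longrightarrow> card (children v) < D"
proof -
  have fin: "finite {u \<in> V. E v u}" using finite_V by simp
  have deg: "card {u \<in> V. E v u} \<le> D"
    using assms by (simp add: max_degree_le_def degree_def)
  then show "card (children v) \<le> D"
    using card_mono[OF fin children_subset_neighbours] by simp
  assume "v \<noteq> r"
  then have "insert (parent v) (children v) \<subseteq> {u \<in> V. E v u}"
    using children_subset_neighbours parent_in_V parent_edge assms(2) by auto
  then have "card (insert (parent v) (children v)) \<le> D"
    using card_mono[OF fin] deg by (meson le_trans)
  then show "card (children v) < D"
    using parent_notin_children[OF assms(2) \<open>v \<noteq> r\<close>] finite_subset[OF children_subset_neighbours fin]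
    by simp
qed

lemma exists_lowest_vertex:
  assumes "w \<in> V" "Q w"
  obtains v where "v \<in> V" "Q v" "\<And>c. c \<in> children v \<Longrightarrow> \<not> Q c"
proof -
  let ?R = "{x \<in> V. Q x}"
  have fin: "finite (depth ` ?R)" using finite_V by simp
  have "Max (depth ` ?R) \<in> depth ` ?R"
    using fin assms by (intro Max_in) auto
  then obtain v where v: "v \<in> ?R" "depth v = Max (depth ` ?R)"
    by auto
  show thesis
  proof (rule that)
    fix c assume "c \<in> children v"
    then have "depth v < depth c" by (rule depth_child)
    then show "\<not> Q c"
      using \<open>c \<in> children v\<close> v(2) Max_ge[OF fin] by (fastforce simp: children_def)
  qed (use v in auto)
qed

lemma card_Int_subtree_le:
  assumes "\<And>c. c \<in> children v \<Longrightarrow> card (A \<inter> subtree c) \<le> 1"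
  shows "card (A \<inter> subtree v) \<le> card (A \<inter> {v}) + card (children v)"
proof -
  have fin: "finite (children v)" "\<And>c. finite (A \<inter> subtree c)"
    using finite_V subtree_subset_V by (auto simp: children_def intro: finite_subset)
  have "A \<inter> subtree v \<subseteq> (A \<inter> {v}) \<union> (\<Union>c \<in> children v. A \<inter> subtree c)"
    using subtree_subset_children by blast
  then have "card (A \<inter> subtree v) \<le> card ((A \<inter> {v}) \<union> (\<Union>c \<in> children v. A \<inter> subtree c))"
    using fin by (intro card_mono finite_UnI finite_UN_I) auto
  also have "\<dots> \<le> card (A \<inter> {v}) + card (\<Union>c \<in> children v. A \<inter> subtree c)"
    by (rule card_Un_le)
  also have "card (\<Union>c \<in> children v. A \<inter> subtree c) \<le> (\<Sum>c \<in> children v. card (A \<inter> subtree c))"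
    by (rule card_UN_le[OF fin(1)])
  also have "\<dots> \<le> card (children v)"
    using sum_mono[of "children v" "\<lambda>c. card (A \<inter> subtree c)" "\<lambda>_. 1"] assms by simp
  finally show ?thesis by simp
qed


lemma linking_path_in_subtree:
  assumes "a \<in> A \<inter> subtree v" "b \<in> A \<inter> subtree v" "a \<noteq> b"
  shows "\<exists>q. linking_path V E A q \<and> set q \<subseteq> subtree v"
proof -
  obtain wa where wa: "is_walk (subtree v) E wa" "hd wa = a" "last wa = v"
    using walk_within_subtree assms(1) by blast
  obtain wb where wb: "is_walk (subtree v) E wb" "hd wb = b" "last wb = v"
    using walk_within_subtree assms(2) by blast
  obtain q where q: "is_path (subtree v) E q" "hd q = a" "last q = b"
    using path_between_walks_with_common_end[OF edge_sym wa(1) wb(1)] wa wb by auto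
  then have "set q \<subseteq> subtree v"
    by (simp add: is_path_set)
  then have "is_path V E q"
    using q(1) subtree_subset_V by (blast intro: is_path_mono)
  then show ?thesis
    using q assms \<open>set q \<subseteq> subtree v\<close> by (intro exI[of _ q]) (simp add: linking_path_def)
qed

lemma card_Int_subtree_le_degree_minus_one:
  assumes "max_degree_le V E D" "v \<in> V" "v \<noteq> r" "children v \<noteq> {}"
    and "\<And>c. c \<in> children v \<Longrightarrow> card (A \<inter> subtree c) \<le> 1"
    and "v \<in> A \<Longrightarrow> card (A \<inter> subtree v) \<le> 1"
  shows "card (A \<inter> subtree v) \<le> D - 1"
proof -
  have "card (A \<inter> subtree v) \<le> card (A \<inter> {v}) + card (children v)"
    using assms(5) by (rule card_Int_subtree_le)
  moreover have "0 < card (children v)"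
    using assms(4) finite_V by (auto simp: children_def card_gt_0_iff)
  ultimately show ?thesis
    using card_children_le(2)[OF assms(1-3)] assms(6) by (cases "v \<in> A") auto
qed

lemma large_set_contains_root:
  assumes "max_degree_le V E D" "A \<subseteq> V" "D + 1 \<le> card A"
    and "\<And>c. c \<in> children r \<Longrightarrow> card (A \<inter> subtree c) \<le> 1"
  shows "r \<in> A"
proof -
  have "card (A \<inter> subtree r) \<le> card (A \<inter> {r}) + card (children r)"
    using assms(4) by (rule card_Int_subtree_le)
  then have "card A \<le> card (A \<inter> {r}) + D"
    using card_children_le(1)[OF assms(1) root_in_V] assms(2)
    by (simp add: subtree_root Int_absorb2)
  then show ?thesis using assms(3) by (cases "r \<in> A") auto
qed

lemma linking_path_with_small_subtree:
  assumes "max_degree_le V E D" "finite I" "I \<noteq> {}"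
    and "\<And>i. i \<in> I \<Longrightarrow> S i \<subseteq> V"
    and "\<And>i j. i \<in> I \<Longrightarrow> j \<in> I \<Longrightarrow> i \<noteq> j \<Longrightarrow> S i \<inter> S j = {}"
    and "\<And>i. i \<in> I \<Longrightarrow> 2 + (D - 1) * (card I - 1) \<le> card (S i)"
  obtains i v q where "i \<in> I" "linking_path V E (S i) q" "set q \<subseteq> subtree v"
    and "I \<noteq> {i} \<Longrightarrow> v \<noteq> r" and "\<And>k. k \<in> I \<Longrightarrow> k \<noteq> i \<Longrightarrow> card (S k \<inter> subtree v) \<le> D - 1"
proof -
  define rich where "rich x \<longleftrightarrow> (\<exists>k\<in>I. 2 \<le> card (S k \<inter> subtree x))" for x
  obtain i0 where "i0 \<in> I" using assms(3) by blast
  then have "rich r"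
    using assms(4,6) by (force simp: rich_def subtree_root Int_absorb2)
  then obtain v where v: "v \<in> V" "rich v" and lowest: "\<And>c. c \<in> children v \<Longrightarrow> \<not> rich c"
    using exists_lowest_vertex[of r rich] root_in_V by blast
  have poor_children: "card (S k \<inter> subtree c) \<le> 1" if "c \<in> children v" "k \<in> I" for c k
    using lowest[OF that(1)] that(2) by (force simp: rich_def)
  \<comment> \<open>Preferring a set that contains v ensures that every other set containing v
     meets the subtree of v in v alone.\<close>
  obtain i where i: "i \<in> I" "2 \<le> card (S i \<inter> subtree v)"
    and preferred: "\<And>k. k \<in> I \<Longrightarrow> v \<in> S k \<Longrightarrow> 2 \<le> card (S k \<inter> subtree v) \<Longrightarrow> k = i"
  proof (cases "\<exists>k\<in>I. v \<in> S k \<and> 2 \<le> card (S k \<inter> subtree v)")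
    case True
    then obtain i where "i \<in> I" "v \<in> S i" "2 \<le> card (S i \<inter> subtree v)" by blast
    then show ?thesis using assms(5) by (intro that) blast+
  next
    case False
    then show ?thesis using v(2) that by (auto simp: rich_def)
  qed
  obtain a b where ab: "a \<in> S i \<inter> subtree v" "b \<in> S i \<inter> subtree v" "a \<noteq> b"
    using i(2) by (metis card.infinite card_le_Suc0_iff_eq not_less_eq_eq numeral_2_eq_2 zero_le)
  obtain q where q: "linking_path V E (S i) q" "set q \<subseteq> subtree v"
    using linking_path_in_subtree[OF ab] by blast
  have "children v \<noteq> {}"
    using ab subtree_subset_children by blast
  have small: "card (S k \<inter> subtree v) \<le> D - 1" if "v \<noteq> r" "k \<in> I" "k \<noteq> i" for k
    using card_Int_subtree_le_degree_minus_one[OF assms(1) v(1) that(1) \<open>children v \<noteq> {}\<close>]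
      poor_children preferred that(2,3) by force
  have "v \<noteq> r" if several: "I \<noteq> {i}"
  proof
    assume "v = r"
    obtain k where k: "k \<in> I" "k \<noteq> i" using several i(1) by blast
    have "card {i, k} \<le> card I"
      using assms(2) i(1) k(1) by (intro card_mono) auto
    then have "2 \<le> card I"
      using k(2) by simp
    have "r \<in> S j" if "j \<in> I" for j
    proof (rule large_set_contains_root[OF assms(1) assms(4)[OF that]])
      have "D - 1 \<le> (D - 1) * (card I - 1)"
        using \<open>2 \<le> card I\<close> by (simp add: Suc_le_eq)
      then show "D + 1 \<le> card (S j)"
        using assms(6)[OF that] by linarith
      show "card (S j \<inter> subtree c) \<le> 1" if "c \<in> children r" for c
        using poor_children \<open>v = r\<close> that \<open>j \<in> I\<close> by blast
    qed
    then show False using assms(5) i(1) k by blast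
  qed
  then show thesis
    using that i(1) q small by blast
qed

end


lemma card_Diff_lower_bound:
  assumes "finite A" "card (A \<inter> X) \<le> d" "2 + d * n \<le> card A" "n \<noteq> 0"
  shows "2 + d * (n - 1) \<le> card (A - X)"
proof -
  have "d * n = d * (n - 1) + d" using assms(4) by (cases n) auto
  then show ?thesis
    using assms(1-3) card_Diff_subset_Int[of A X] by simp
qed

lemma disjoint_linkage_exists:
  fixes S :: "'i \<Rightarrow> 'a set"
  assumes "finite V" "\<And>u v. E u v \<Longrightarrow> E v u" "connected_graph V E" "max_degree_le V E D"
    and "finite I" "\<And>i. i \<in> I \<Longrightarrow> S i \<subseteq> V"
    and "\<And>i j. i \<in> I \<Longrightarrow> j \<in> I \<Longrightarrow> i \<noteq> j \<Longrightarrow> S i \<inter> S j = {}"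
    and "\<And>i. i \<in> I \<Longrightarrow> 2 + (D - 1) * (card I - 1) \<le> card (S i)"
  shows "\<exists>P. disjoint_linkage V E I S P"
  using assms
proof (induction "card I" arbitrary: V I S)
  case 0
  have "I = {}" using "0.hyps" "0.prems"(5) by simp
  then show ?case using disjoint_linkage_empty by blast
next
  case (Suc n)
  obtain r parent depth where "rooted_spanning_tree V E r parent depth"
    using connected_graph_has_rooted_spanning_tree[OF Suc.prems(1-3)] .
  then interpret T: rooted_spanning_tree V E r parent depth .
  have "I \<noteq> {}" using Suc.hyps(2) by auto
  obtain i v q where i: "i \<in> I" and q: "linking_path V E (S i) q" "set q \<subseteq> T.subtree v"
    and v: "I \<noteq> {i} \<Longrightarrow> v \<noteq> r"
    and small: "\<And>k. k \<in> I \<Longrightarrow> k \<noteq> i \<Longrightarrow> card (S k \<inter> T.subtree v) \<le> D - 1"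
    by (rule T.linking_path_with_small_subtree[of D I S])
      (assumption | rule Suc.prems(4-8) \<open>I \<noteq> {}\<close> that)+
  show ?case
  proof (cases "I = {i}")
    case True
    then show ?thesis using disjoint_linkage_singleton[where S = S, OF q(1)] by auto
  next
    case False
    define V' where "V' = V - T.subtree v"
    define S' where "S' k = S k - T.subtree v" for k
    have card_I': "card (I - {i}) = n" using Suc.hyps(2) i by simp
    have "\<exists>P. disjoint_linkage V' E (I - {i}) S' P"
    proof (rule Suc.hyps(1))
      show "n = card (I - {i})" by (simp add: card_I')
      show "E u w \<Longrightarrow> E w u" for u w by (rule Suc.prems(2))
      show "S' k \<inter> S' j = {}" if "k \<in> I - {i}" "j \<in> I - {i}" "k \<noteq> j" for k j
        using Suc.prems(7)[of k j] that unfolding S'_def by blast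
      show "connected_graph V' E"
        unfolding V'_def using T.connected_graph_Diff_subtree v False by blast
      show "max_degree_le V' E D"
        using max_degree_le_subset[OF Suc.prems(4,1)] by (simp add: V'_def)
      show "2 + (D - 1) * (card (I - {i}) - 1) \<le> card (S' k)" if k: "k \<in> I - {i}" for k
        unfolding S'_def card_I'
      proof (rule card_Diff_lower_bound)
        show "finite (S k)" using Suc.prems(1,6) k by (blast intro: finite_subset)
        show "card (S k \<inter> T.subtree v) \<le> D - 1" using small k by blast
        show "2 + (D - 1) * n \<le> card (S k)"
          using Suc.prems(8)[of k] k by (simp flip: Suc.hyps(2))
        show "n \<noteq> 0" using card_I' k Suc.prems(5) by (auto simp: card_gt_0_iff)
      qed
    qed (use Suc.prems(1,5,6) in \<open>auto simp: V'_def S'_def\<close>)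
    then obtain P where "disjoint_linkage V' E (I - {i}) S' P" by blast
    then have "disjoint_linkage V E I S (P(i := q))"
      by (rule disjoint_linkage_insert) (use q in \<open>auto simp: V'_def S'_def\<close>)
    then show ?thesis by blast
  qed
qed

theorem lemma6p4:
  fixes V :: "'a set" and E :: "'a \<Rightarrow> 'a \<Rightarrow> bool"
    and D m :: nat and S :: "nat \<Rightarrow> 'a set"
  assumes "D \<ge> 1" and "m \<ge> 1"
    and "simple_graph V E" and "connected_graph V E" and "max_degree_le V E D"
    and "\<And>i. i \<in> {1..m} \<Longrightarrow> S i \<subseteq> V"
    and "\<And>i j. i \<in> {1..m} \<Longrightarrow> j \<in> {1..m} \<Longrightarrow> i \<noteq> j \<Longrightarrow> S i \<inter> S j = {}"
    and "\<And>i. i \<in> {1..m} \<Longrightarrow> card (S i) \<ge> 2 + (D - 1) * (m - 1)"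
  shows "\<exists>P :: nat \<Rightarrow> 'a list.
           (\<forall>i\<in>{1..m}. is_path V E (P i) \<and> hd (P i) \<noteq> last (P i)
                        \<and> hd (P i) \<in> S i \<and> last (P i) \<in> S i)
         \<and> (\<forall>i\<in>{1..m}. \<forall>j\<in>{1..m}. i \<noteq> j \<longrightarrow> set (P i) \<inter> set (P j) = {})"
proof -
  have fin: "finite V" and sym: "\<And>u v. E u v \<Longrightarrow> E v u"
    using assms(3) by (auto simp: simple_graph_def)
  have card_S: "2 + (D - 1) * (card {1..m} - 1) \<le> card (S i)" if "i \<in> {1..m}" for i
    using assms(8)[OF that] by simp
  obtain P where "disjoint_linkage V E {1..m} S P"
    using disjoint_linkage_exists[where I = "{1..m}" and S = S, OF fin sym assms(4,5)
        finite_atLeastAtMost assms(6,7) card_S] by blast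
  then show ?thesis
    by (auto simp: disjoint_linkage_def linking_path_def)
qed

end
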